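(* Suppose that $\mathcal L,\mathcal K,\mathscr J_1,\mathscr J_2$ are subsets of $\{1,\dots,n\}$ such that $\mathcal K\supseteq\mathscr J_1\cup\mathscr J_2$ and $\mathcal L\supseteq\mathscr J_1\cap\mathscr J_2\cap\mathcal K$. Then $$L_{\mathscr J_1}\cdot L_{\mathscr J_2}\subseteq L_{\mathcal L}+I(A_{\mathcal K}).$$
   Context: $\mathbb K$ is a field, $R=\mathbb K[x_{i_1,\dots,i_n}:1\le i_j\le a_j]$, $A=(x_{i_1,\dots,i_n})$ the generic $a_1\times\dots\times a_n$ table. For a tuple $\sigma$ with $\sigma_j\in\{1,\dots,a_j\}\cup\{+\}$, $x_\sigma$ is the sum of all $x_{i_1,\dots,i_n}$ with $i_j=\sigma_j$ whenever $\sigma_j\ne+$. For $\mathscr J=\{j_1<\dots<j_m\}\subseteq\{1,\dots,n\}$ the margin $A_{\mathscr J}$ is the table whose $(i_1,\dots,i_m)$ entry is $x_\sigma$ with $\sigma_{j_r}=i_r$, $\sigma_j=+$ for $j\notin\mathscr J$; $L_{\mathscr J}$ is the ideal of $R$ generated by the entries of $A_{\mathscr J}$. For a table $B$ with entries in $R$, $I(B)$ is the ideal generated by all generalized $2\times2$ minors of $B$, i.e. determinants $\det\begin{pmatrix} b_{i_1,\dots,i_m} & b_{j_1,\dots,j_{l-1},i_l,j_{l+1},\dots,j_m}\\ b_{i_1,\dots,i_{l-1},j_l,i_{l+1},\dots,i_m} & b_{j_1,\dots,j_m}\end{pmatrix}$. *)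

theory Defs
  imports Complex_Main "HOL-Library.Poly_Mapping"
begin

type_synonym ('v, 'k) mpoly = "('v \<Rightarrow>\<^sub>0 nat) \<Rightarrow>\<^sub>0 'k"

definition var :: "'v \<Rightarrow> ('v, 'k::comm_ring_1) mpoly" where
  "var v = Poly_Mapping.single (Poly_Mapping.single v 1) 1"

definition ideal_gen :: "'a::comm_ring_1 set \<Rightarrow> 'a set" where
  "ideal_gen S = module.span ((*) :: 'a \<Rightarrow> 'a \<Rightarrow> 'a) S"

definition ideal_prod :: "'a::comm_ring_1 set \<Rightarrow> 'a set \<Rightarrow> 'a set" where
  "ideal_prod I J = ideal_gen {x * y | x y. x \<in> I \<and> y \<in> J}"

definition ideal_sum :: "'a::comm_ring_1 set \<Rightarrow> 'a set \<Rightarrow> 'a set" where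
  "ideal_sum I J = ideal_gen (I \<union> J)"

text \<open>Cells of the a_0 x ... x a_(n-1) table (coordinates 0-based j < n, entries 1..a j).\<close>
definition cells :: "nat \<Rightarrow> (nat \<Rightarrow> nat) \<Rightarrow> nat list set" where
  "cells n a = {i. length i = n \<and> (\<forall>j<n. 1 \<le> i ! j \<and> i ! j \<le> a j)}"

text \<open>x_sigma: sigma is a list of length n, None standing for '+'.\<close>
definition xsum :: "nat \<Rightarrow> (nat \<Rightarrow> nat) \<Rightarrow> nat option list \<Rightarrow> (nat list, 'k::comm_ring_1) mpoly" where
  "xsum n a \<sigma> = (\<Sum>i\<in>{i \<in> cells n a. \<forall>j<n. \<sigma> ! j \<noteq> None \<longrightarrow> i ! j = the (\<sigma> ! j)}. var i)"

text \<open>Index tuples of the margin A_J, encoded as sigma with sigma_j in 1..a j for j in J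
  and sigma_j = + otherwise; the entry at sigma is xsum sigma.\<close>
definition margin_idx :: "nat \<Rightarrow> (nat \<Rightarrow> nat) \<Rightarrow> nat set \<Rightarrow> nat option list set" where
  "margin_idx n a J = {\<sigma>. length \<sigma> = n \<and>
     (\<forall>j<n. (j \<in> J \<longrightarrow> (\<exists>k. \<sigma> ! j = Some k \<and> 1 \<le> k \<and> k \<le> a j)) \<and>
            (j \<notin> J \<longrightarrow> \<sigma> ! j = None))}"

definition L_ideal :: "nat \<Rightarrow> (nat \<Rightarrow> nat) \<Rightarrow> nat set \<Rightarrow> (nat list, 'k::comm_ring_1) mpoly set" where
  "L_ideal n a J = ideal_gen (xsum n a ` margin_idx n a J)"

text \<open>Generalized 2x2 minors of the margin table A_K: for index tuples u, v and a
  coordinate l of K, det [b_u, b_(v with l := u_l); b_(u with l := v_l), b_v].\<close>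
definition gen_minors :: "nat \<Rightarrow> (nat \<Rightarrow> nat) \<Rightarrow> nat set \<Rightarrow> (nat list, 'k::comm_ring_1) mpoly set" where
  "gen_minors n a K = {xsum n a u * xsum n a v - xsum n a (v[l := u ! l]) * xsum n a (u[l := v ! l]) | u v l.
      u \<in> margin_idx n a K \<and> v \<in> margin_idx n a K \<and> l \<in> K}"

definition I_margin :: "nat \<Rightarrow> (nat \<Rightarrow> nat) \<Rightarrow> nat set \<Rightarrow> (nat list, 'k::comm_ring_1) mpoly set" where
  "I_margin n a K = ideal_gen (gen_minors n a K)"

end

theory Submission
  imports Defs
begin

text \<open>It suffices to treat products \<open>x\<^sub>\<sigma> x\<^sub>\<tau>\<close> of generators of \<open>L\<^bsub>J\<^sub>1\<^esub>\<close> and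
  \<open>L\<^bsub>J\<^sub>2\<^esub>\<close>. Refining to the margin \<open>A\<^sub>K\<close> writes \<open>x\<^sub>\<sigma> x\<^sub>\<tau>\<close> as the sum of \<open>x\<^sub>u x\<^sub>v\<close>
  over the pairs of entries \<open>u, v\<close> of \<open>A\<^sub>K\<close> refining \<open>\<sigma>\<close> and \<open>\<tau>\<close>. Exchanging the
  coordinates in \<open>S = J\<^sub>2 - J\<^sub>1\<close> between \<open>u\<close> and \<open>v\<close>, one at a time, changes \<open>x\<^sub>u x\<^sub>v\<close>
  only by generalized \<open>2\<times>2\<close> minors of \<open>A\<^sub>K\<close>, and it maps these pairs bijectively onto the
  pairs refining \<open>\<sigma>'\<close> (\<open>\<sigma>\<close> with the entries of \<open>\<tau>\<close> on \<open>S\<close>) and \<open>\<tau>'\<close> (\<open>\<tau>\<close> with the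
  coordinates in \<open>S\<close> summed out). Hence \<open>x\<^sub>\<sigma> x\<^sub>\<tau> \<equiv> x\<^sub>\<sigma>\<^sub>' x\<^sub>\<tau>\<^sub>'\<close> modulo \<open>I(A\<^sub>K)\<close>,
  and \<open>x\<^sub>\<tau>\<^sub>'\<close> lies in \<open>L\<^bsub>J\<^sub>1 \<inter> J\<^sub>2\<^esub> \<subseteq> L\<^sub>\<L>\<close>.\<close>

lemma module_mult: "module ((*) :: 'a::comm_ring_1 \<Rightarrow> 'a \<Rightarrow> 'a)"
  by unfold_locales (auto simp: algebra_simps)

abbreviation is_ideal :: "'a::comm_ring_1 set \<Rightarrow> bool" where
  "is_ideal \<equiv> module.subspace (*)"

lemma is_ideal_ideal_gen: "is_ideal (ideal_gen S)"
  unfolding ideal_gen_def by (rule module.subspace_span[OF module_mult])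

lemma ideal_gen_base: "x \<in> S \<Longrightarrow> x \<in> ideal_gen S"
  unfolding ideal_gen_def by (rule module.span_base[OF module_mult])

lemma ideal_gen_zero: "0 \<in> ideal_gen S"
  unfolding ideal_gen_def by (rule module.span_zero[OF module_mult])

lemma ideal_gen_add: "x \<in> ideal_gen S \<Longrightarrow> y \<in> ideal_gen S \<Longrightarrow> x + y \<in> ideal_gen S"
  unfolding ideal_gen_def by (rule module.span_add[OF module_mult])

lemma ideal_gen_sum: "(\<And>x. x \<in> A \<Longrightarrow> f x \<in> ideal_gen S) \<Longrightarrow> sum f A \<in> ideal_gen S"
  unfolding ideal_gen_def by (rule module.span_sum[OF module_mult])

lemma ideal_gen_mult_left: "x \<in> ideal_gen S \<Longrightarrow> c * x \<in> ideal_gen S"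
  unfolding ideal_gen_def by (rule module.span_scale[OF module_mult])

lemma ideal_gen_least: "S \<subseteq> I \<Longrightarrow> is_ideal I \<Longrightarrow> ideal_gen S \<subseteq> I"
  unfolding ideal_gen_def by (rule module.span_minimal[OF module_mult])

lemma is_ideal_mult_right_preimage: "is_ideal I \<Longrightarrow> is_ideal {x. x * y \<in> I}"
  unfolding module.subspace_def[OF module_mult] by (simp add: distrib_right mult.assoc)

lemma is_ideal_mult_left_preimage: "is_ideal I \<Longrightarrow> is_ideal {y. x * y \<in> I}"
  unfolding module.subspace_def[OF module_mult] by (simp add: distrib_left mult.left_commute)

lemma ideal_prod_ideal_gen_subset:
  fixes G1 G2 T :: "'a::comm_ring_1 set"
  assumes "\<And>g h. g \<in> G1 \<Longrightarrow> h \<in> G2 \<Longrightarrow> g * h \<in> ideal_gen T"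
  shows "ideal_prod (ideal_gen G1) (ideal_gen G2) \<subseteq> ideal_gen T"
proof -
  have "ideal_gen G2 \<subseteq> {y. g * y \<in> ideal_gen T}" if "g \<in> G1" for g
    using assms that by (intro ideal_gen_least is_ideal_mult_left_preimage is_ideal_ideal_gen) auto
  then have "ideal_gen G1 \<subseteq> {x. x * y \<in> ideal_gen T}" if "y \<in> ideal_gen G2" for y
    using that by (intro ideal_gen_least is_ideal_mult_right_preimage is_ideal_ideal_gen) auto
  then show ?thesis
    unfolding ideal_prod_def by (intro ideal_gen_least is_ideal_ideal_gen) auto
qed

lemma le_sum_lessThanI:
  fixes a :: "nat \<Rightarrow> nat"
  shows "j < n \<Longrightarrow> k \<le> a j \<Longrightarrow> k \<le> (\<Sum>j<n. a j)"
  by (rule le_trans[OF _ member_le_sum]) auto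

lemma finite_cells: "finite (cells n a)"
proof (rule finite_subset)
  show "cells n a \<subseteq> {i. set i \<subseteq> {..\<Sum>j<n. a j} \<and> length i = n}"
    by (auto simp: cells_def in_set_conv_nth) (metis le_sum_lessThanI)
qed (rule finite_lists_length_eq, simp)

lemma finite_margin_idx: "finite (margin_idx n a K)"
proof (rule finite_subset)
  show "margin_idx n a K \<subseteq> {\<sigma>. set \<sigma> \<subseteq> insert None (Some ` {..\<Sum>j<n. a j}) \<and> length \<sigma> = n}"
    by (fastforce simp: margin_idx_def in_set_conv_nth intro: le_sum_lessThanI)
qed (rule finite_lists_length_eq, simp)

lemma length_margin_idx: "\<sigma> \<in> margin_idx n a K \<Longrightarrow> length \<sigma> = n"
  by (simp add: margin_idx_def)

definition refines :: "'a option list \<Rightarrow> 'a option list \<Rightarrow> bool" where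
  "refines u \<sigma> \<longleftrightarrow> length u = length \<sigma> \<and> (\<forall>j < length \<sigma>. \<sigma> ! j \<noteq> None \<longrightarrow> u ! j = \<sigma> ! j)"

definition replace_on :: "nat set \<Rightarrow> 'a list \<Rightarrow> 'a list \<Rightarrow> 'a list" where
  "replace_on S u v = map (\<lambda>j. if j \<in> S then v ! j else u ! j) [0..<length u]"

lemma length_replace_on [simp]: "length (replace_on S u v) = length u"
  by (simp add: replace_on_def)

lemma nth_replace_on [simp]:
  "j < length u \<Longrightarrow> replace_on S u v ! j = (if j \<in> S then v ! j else u ! j)"
  by (simp add: replace_on_def)

lemma replace_on_empty [simp]: "replace_on {} u v = u"
  by (simp add: list_eq_iff_nth_eq)

lemma replace_on_insert:
  "l \<notin> S \<Longrightarrow> l < length u \<Longrightarrow> replace_on (insert l S) u v = (replace_on S u v)[l := v ! l]"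
  by (auto simp: list_eq_iff_nth_eq nth_list_update)

lemma replace_on_replace_on:
  "length u = length v \<Longrightarrow> replace_on S (replace_on S u v) (replace_on S v u) = u"
  by (simp add: list_eq_iff_nth_eq)

lemma refines_replace_on:
  "refines u \<sigma> \<Longrightarrow> refines v \<tau> \<Longrightarrow> length \<sigma> = length \<tau> \<Longrightarrow>
    refines (replace_on S u v) (replace_on S \<sigma> \<tau>)"
  by (simp add: refines_def)

lemma replace_on_in_margin_idx:
  "u \<in> margin_idx n a J1 \<Longrightarrow> v \<in> margin_idx n a J2 \<Longrightarrow>
    replace_on S u v \<in> margin_idx n a (J1 - S \<union> J2 \<inter> S)"
  by (simp add: margin_idx_def)

lemma xsum_eq_sum_refinements:
  assumes "J \<subseteq> K" "K \<subseteq> {..<n}" "\<sigma> \<in> margin_idx n a J"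
  shows "xsum n a \<sigma> = (\<Sum>u \<in> {u \<in> margin_idx n a K. refines u \<sigma>}. xsum n a u)"
proof -
  define C where "C \<tau> = {c \<in> cells n a. \<forall>j<n. \<tau> ! j \<noteq> None \<longrightarrow> c ! j = the (\<tau> ! j)}" for \<tau>
  define R where "R = {u \<in> margin_idx n a K. refines u \<sigma>}"
  define cell_margin where "cell_margin c = map (\<lambda>j. if j \<in> K then Some (c ! j) else None) [0..<n]"
    for c :: "nat list"
  have xsum_C: "xsum n a \<tau> = sum var (C \<tau>)" for \<tau>
    by (simp add: xsum_def C_def)
  have fibre: "{c \<in> C \<sigma>. cell_margin c = u} = C u" if "u \<in> R" for u
    using that assms
    by (auto simp: C_def R_def cell_margin_def refines_def margin_idx_def list_eq_iff_nth_eq)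
      (metis option.distinct(1) option.inject)
  have "cell_margin ` C \<sigma> \<subseteq> R"
    using assms
    by (auto simp: C_def R_def cell_margin_def refines_def margin_idx_def cells_def)
      (metis option.distinct(1) subsetD)
  then have "sum var (C \<sigma>) = (\<Sum>u\<in>R. sum var {c \<in> C \<sigma>. cell_margin c = u})"
    by (intro sum.group[symmetric])
      (auto simp: C_def R_def intro: finite_subset[OF _ finite_cells] finite_subset[OF _ finite_margin_idx])
  also have "\<dots> = (\<Sum>u\<in>R. xsum n a u)"
    by (simp add: fibre xsum_C)
  finally show ?thesis
    by (simp add: xsum_C R_def)
qed

lemma L_ideal_mono:
  assumes "J \<subseteq> K" "K \<subseteq> {..<n}"
  shows "L_ideal n a J \<subseteq> (L_ideal n a K :: (nat list, 'k::comm_ring_1) mpoly set)"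
  unfolding L_ideal_def
proof (intro ideal_gen_least is_ideal_ideal_gen image_subsetI)
  fix \<sigma> assume "\<sigma> \<in> margin_idx n a J"
  then have "xsum n a \<sigma> = (\<Sum>u \<in> {u \<in> margin_idx n a K. refines u \<sigma>}. xsum n a u)"
    by (rule xsum_eq_sum_refinements[OF assms])
  also have "\<dots> \<in> ideal_gen (xsum n a ` margin_idx n a K :: (nat list, 'k) mpoly set)"
    by (intro ideal_gen_sum ideal_gen_base imageI) simp
  finally show "xsum n a \<sigma> \<in> ideal_gen (xsum n a ` margin_idx n a K :: (nat list, 'k) mpoly set)" .
qed

lemma xsum_exchange_in_I_margin:
  assumes "K \<subseteq> {..<n}" "S \<subseteq> K" "u \<in> margin_idx n a K" "v \<in> margin_idx n a K"
  shows "xsum n a u * xsum n a v - xsum n a (replace_on S u v) * xsum n a (replace_on S v u)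
           \<in> (I_margin n a K :: (nat list, 'k::comm_ring_1) mpoly set)"
proof -
  have "finite S"
    using assms(1,2) by (intro finite_subset[of S "{..<n}"]) auto
  then show ?thesis
    using \<open>S \<subseteq> K\<close>
  proof (induction rule: finite_subset_induct)
    case empty
    then show ?case
      by (simp add: I_margin_def ideal_gen_zero)
  next
    case (insert l S)
    let ?x = "xsum n a :: nat option list \<Rightarrow> (nat list, 'k) mpoly"
    let ?u = "replace_on S u v" and ?v = "replace_on S v u"
    have l: "l < length u" "l < length v"
      using insert(2) assms by (auto simp: length_margin_idx)
    have "?u \<in> margin_idx n a K" "?v \<in> margin_idx n a K"
      using replace_on_in_margin_idx[OF assms(3,4)] replace_on_in_margin_idx[OF assms(4,3)]
      by (simp_all add: Un_Diff_Int)
    then have "?x ?u * ?x ?v - ?x (?v[l := ?u ! l]) * ?x (?u[l := ?v ! l]) \<in> gen_minors n a K"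
      unfolding gen_minors_def using insert(2) by blast
    moreover have "?v[l := ?u ! l] = replace_on (insert l S) v u"
      "?u[l := ?v ! l] = replace_on (insert l S) u v"
      using insert(3) l by (simp_all add: replace_on_insert)
    ultimately have "?x ?u * ?x ?v - ?x (replace_on (insert l S) v u) * ?x (replace_on (insert l S) u v)
        \<in> I_margin n a K"
      unfolding I_margin_def by (auto intro: ideal_gen_base)
    then have "?x ?u * ?x ?v - ?x (replace_on (insert l S) u v) * ?x (replace_on (insert l S) v u)
        \<in> I_margin n a K"
      by (simp only: mult.commute[of "?x (replace_on (insert l S) v u)"])
    with insert(4) have "(?x u * ?x v - ?x ?u * ?x ?v) +
        (?x ?u * ?x ?v - ?x (replace_on (insert l S) u v) * ?x (replace_on (insert l S) v u))
        \<in> I_margin n a K"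
      unfolding I_margin_def by (rule ideal_gen_add)
    then show ?case
      by simp
  qed
qed

lemma xsum_mult_exchange_in_I_margin:
  assumes K: "K \<subseteq> {..<n}" and "S \<subseteq> K" and J: "J1 \<subseteq> K" "J2 \<subseteq> K"
    and \<sigma>: "\<sigma> \<in> margin_idx n a J1" and \<tau>: "\<tau> \<in> margin_idx n a J2"
  shows "xsum n a \<sigma> * xsum n a \<tau> - xsum n a (replace_on S \<sigma> \<tau>) * xsum n a (replace_on S \<tau> \<sigma>)
           \<in> (I_margin n a K :: (nat list, 'k::comm_ring_1) mpoly set)"
proof -
  let ?x = "xsum n a :: nat option list \<Rightarrow> (nat list, 'k) mpoly"
  define R where "R \<mu> = {u \<in> margin_idx n a K. refines u \<mu>}" for \<mu>
  define exchange :: "nat option list \<times> nat option list \<Rightarrow> nat option list \<times> nat option list"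
    where "exchange = (\<lambda>(u, v). (replace_on S u v, replace_on S v u))"
  define \<sigma>' \<tau>' where "\<sigma>' = replace_on S \<sigma> \<tau>" and "\<tau>' = replace_on S \<tau> \<sigma>"
  have len: "length \<sigma> = n" "length \<tau> = n"
    using \<sigma> \<tau> by (simp_all add: length_margin_idx)
  have product: "?x \<mu> * ?x \<nu> = (\<Sum>(u, v) \<in> R \<mu> \<times> R \<nu>. ?x u * ?x v)"
    if "\<mu> \<in> margin_idx n a I1" "\<nu> \<in> margin_idx n a I2" "I1 \<subseteq> K" "I2 \<subseteq> K" for \<mu> \<nu> I1 I2
  proof -
    have "?x \<mu> * ?x \<nu> = (\<Sum>u \<in> R \<mu>. ?x u) * (\<Sum>v \<in> R \<nu>. ?x v)"
      unfolding R_def using that K by (simp only: xsum_eq_sum_refinements)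
    then show ?thesis
      by (simp add: sum_product sum.cartesian_product)
  qed
  have exchange_maps: "exchange ` (R \<mu> \<times> R \<nu>) \<subseteq> R (replace_on S \<mu> \<nu>) \<times> R (replace_on S \<nu> \<mu>)"
    if "length \<mu> = length \<nu>" for \<mu> \<nu>
    using that replace_on_in_margin_idx[of _ n a K _ K S]
    by (auto simp: exchange_def R_def refines_replace_on Un_Diff_Int)
  have "bij_betw exchange (R \<sigma> \<times> R \<tau>) (R \<sigma>' \<times> R \<tau>')"
  proof (rule bij_betw_byWitness[where f' = exchange])
    have "exchange (exchange p) = p" if "p \<in> margin_idx n a K \<times> margin_idx n a K" for p
      using that by (auto simp: exchange_def length_margin_idx replace_on_replace_on)
    then show "\<forall>p \<in> R \<sigma> \<times> R \<tau>. exchange (exchange p) = p" "\<forall>p \<in> R \<sigma>' \<times> R \<tau>'. exchange (exchange p) = p"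
      by (auto simp: R_def)
    show "exchange ` (R \<sigma> \<times> R \<tau>) \<subseteq> R \<sigma>' \<times> R \<tau>'"
      unfolding \<sigma>'_def \<tau>'_def using len by (intro exchange_maps) simp
    show "exchange ` (R \<sigma>' \<times> R \<tau>') \<subseteq> R \<sigma> \<times> R \<tau>"
      using exchange_maps[of \<sigma>' \<tau>'] len by (simp add: \<sigma>'_def \<tau>'_def replace_on_replace_on)
  qed
  have "?x \<sigma>' * ?x \<tau>' = (\<Sum>(u, v) \<in> R \<sigma>' \<times> R \<tau>'. ?x u * ?x v)"
    unfolding \<sigma>'_def \<tau>'_def
    by (rule product[OF replace_on_in_margin_idx[OF \<sigma> \<tau>] replace_on_in_margin_idx[OF \<tau> \<sigma>]])
      (use J \<open>S \<subseteq> K\<close> in auto)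
  also have "\<dots> = (\<Sum>p \<in> R \<sigma> \<times> R \<tau>. case exchange p of (u, v) \<Rightarrow> ?x u * ?x v)"
    by (rule sum.reindex_bij_betw[symmetric]) fact
  finally have "?x \<sigma> * ?x \<tau> - ?x \<sigma>' * ?x \<tau>' =
      (\<Sum>(u, v) \<in> R \<sigma> \<times> R \<tau>. ?x u * ?x v - ?x (replace_on S u v) * ?x (replace_on S v u))"
    using product[OF \<sigma> \<tau> J] by (simp add: exchange_def sum_subtractf case_prod_beta)
  also have "\<dots> \<in> I_margin n a K"
    by (intro ideal_gen_sum[of _ _ "gen_minors n a K", folded I_margin_def])
      (auto simp: R_def intro!: xsum_exchange_in_I_margin[OF K \<open>S \<subseteq> K\<close>])
  finally show ?thesis
    by (simp add: \<sigma>'_def \<tau>'_def)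
qed

lemma xsum_mult_in_ideal_sum:
  assumes "L \<subseteq> {..<n}" "K \<subseteq> {..<n}" "J1 \<union> J2 \<subseteq> K" "J1 \<inter> J2 \<inter> K \<subseteq> L"
    and \<sigma>: "\<sigma> \<in> margin_idx n a J1" and \<tau>: "\<tau> \<in> margin_idx n a J2"
  shows "xsum n a \<sigma> * xsum n a \<tau>
           \<in> (ideal_sum (L_ideal n a L) (I_margin n a K) :: (nat list, 'k::comm_ring_1) mpoly set)"
proof -
  let ?x = "xsum n a :: nat option list \<Rightarrow> (nat list, 'k) mpoly"
  define S where "S = J2 - J1"
  let ?\<sigma>' = "replace_on S \<sigma> \<tau>" and ?\<tau>' = "replace_on S \<tau> \<sigma>"
  have minor: "?x \<sigma> * ?x \<tau> - ?x ?\<sigma>' * ?x ?\<tau>' \<in> I_margin n a K"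
    using assms(2,3) \<sigma> \<tau> by (intro xsum_mult_exchange_in_I_margin) (auto simp: S_def)
  txt \<open>\<open>\<sigma>\<close> is \<open>+\<close> on \<open>S\<close>, so \<open>\<tau>'\<close> is \<open>\<tau>\<close> with the coordinates in \<open>S\<close> summed out.\<close>
  have "?\<tau>' \<in> margin_idx n a (J1 \<inter> J2)"
    using replace_on_in_margin_idx[OF \<tau> \<sigma>, of S] by (simp add: S_def Int_commute Diff_Diff_Int)
  then have "?x ?\<tau>' \<in> L_ideal n a (J1 \<inter> J2)"
    unfolding L_ideal_def by (intro ideal_gen_base imageI)
  also have "\<dots> \<subseteq> L_ideal n a L"
    using assms(1,3,4) by (intro L_ideal_mono) auto
  finally have "?x ?\<sigma>' * ?x ?\<tau>' \<in> L_ideal n a L"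
    unfolding L_ideal_def by (rule ideal_gen_mult_left)
  with minor have "(?x \<sigma> * ?x \<tau> - ?x ?\<sigma>' * ?x ?\<tau>') + ?x ?\<sigma>' * ?x ?\<tau>'
      \<in> ideal_sum (L_ideal n a L) (I_margin n a K)"
    unfolding ideal_sum_def by (intro ideal_gen_add ideal_gen_base) auto
  then show ?thesis
    by simp
qed

theorem proposition6p1:
  fixes n :: nat and a :: "nat \<Rightarrow> nat" and L K J1 J2 :: "nat set"
  assumes "L \<subseteq> {..<n}" and "K \<subseteq> {..<n}" and "J1 \<subseteq> {..<n}" and "J2 \<subseteq> {..<n}"
    and "J1 \<union> J2 \<subseteq> K" and "J1 \<inter> J2 \<inter> K \<subseteq> L"
  shows "ideal_prod (L_ideal n a J1) (L_ideal n a J2)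
           \<subseteq> ideal_sum (L_ideal n a L) (I_margin n a K :: (nat list, 'k::field) mpoly set)"
proof -
  have "xsum n a \<sigma> * xsum n a \<tau> \<in> (ideal_sum (L_ideal n a L) (I_margin n a K) :: (nat list, 'k) mpoly set)"
    if "\<sigma> \<in> margin_idx n a J1" "\<tau> \<in> margin_idx n a J2" for \<sigma> \<tau>
    using assms(1,2,5,6) that by (rule xsum_mult_in_ideal_sum)
  then show ?thesis
    unfolding L_ideal_def[of n a J1] L_ideal_def[of n a J2] ideal_sum_def[of "L_ideal n a L"]
    by (intro ideal_prod_ideal_gen_subset) blast
qed

end
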